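(* Let $k\ge1$, let $(S_i)_{i\in\mathbb{N}}$ be a sequence of subsets of $[0,1]^k$, and let $(\delta_i)_{i\in\mathbb{N}}$ be positive reals with $\delta_i\to0$. For $\delta>0$ put $\Delta(S_i,\delta)=\{\mathbf{x}\in[0,1]^k:\operatorname{dist}(S_i,\mathbf{x})<\delta\}$. Then for every real $C>1$ the sets $\limsup_{i\to\infty}\Delta(S_i,\delta_i)$ and $\limsup_{i\to\infty}\Delta(S_i,C\delta_i)$ have the same Lebesgue measure.
   Context: For sets $E_i$, $\limsup_{i\to\infty}E_i=\bigcap_{j\ge1}\bigcup_{i\ge j}E_i$. $\operatorname{dist}$ is the Euclidean distance from a point to a set. *)

theory Defs
  imports "HOL-Analysis.Analysis"
begin

text \<open>The unit cube [0,1]^k inside the k-dimensional space real^'n (k = CARD('n)).\<close>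
definition unit_cube :: "(real^'n) set" where
  "unit_cube = cbox 0 1"

text \<open>Delta(S, delta): points of the cube at Euclidean distance < delta from S.
  The distance from a point to the empty set is taken as +infinity, so Delta({}, delta) = {}.\<close>
definition Delta :: "(real^'n) set \<Rightarrow> real \<Rightarrow> (real^'n) set" where
  "Delta S \<delta> = {x \<in> unit_cube. S \<noteq> {} \<and> infdist x S < \<delta>}"

definition limsup_set :: "(nat \<Rightarrow> 'a set) \<Rightarrow> 'a set" where
  "limsup_set E = (\<Inter>j. \<Union>i\<in>{j..}. E i)"

end

theory Submission
  imports Defs
begin

text \<open>
  Since \<open>Delta (S i) (\<delta> i) \<subseteq> Delta (S i) (C * \<delta> i)\<close>, it suffices to show that the
  larger limsup set \<open>L\<close> exceeds the smaller one by a null set, i.e. that for every \<open>j\<close>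
  the set \<open>L - A\<^sub>j\<close> is null, where \<open>A\<^sub>j = \<Union>i\<ge>j. Delta (S i) (\<delta> i)\<close> is a tail union.

  Every \<open>x \<in> L\<close> lies in \<open>Delta (S i) (C * \<delta> i)\<close> for infinitely many \<open>i\<close>, so it is
  \<open>C * \<delta> i\<close>-close to a point \<open>s \<in> S i\<close>.  The ball of radius \<open>(C + 1) * \<delta> i\<close> around \<open>x\<close>
  contains \<open>ball s (\<delta> i) \<inter> [0,1]^k \<subseteq> A\<^sub>j\<close>, and since the cube is uniformly "thick" this
  piece fills a fixed fraction \<open>c > 0\<close> (depending only on \<open>k\<close> and \<open>C\<close>) of the ball.  So \<open>A\<^sub>j\<close>
  has lower density at least \<open>c\<close> at every point of \<open>L - A\<^sub>j\<close> on arbitrarily small balls,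
  and a Vitali covering argument shows that such a set disjoint from \<open>A\<^sub>j\<close> is null.
\<close>

lemma emeasure_le_by_dense_balls:
  fixes N A G :: "'a::euclidean_space set" and c :: real
  assumes N: "N \<in> sets lebesgue" and A: "A \<in> sets lebesgue" and disj: "N \<inter> A = {}"
    and G: "open G" "N \<subseteq> G" and c: "c \<le> 1"
    and dens: "\<And>x d. x \<in> N \<Longrightarrow> d > 0 \<Longrightarrow> \<exists>r. 0 < r \<and> r < d \<and>
        c * measure lebesgue (ball x r) \<le> measure lebesgue (ball x r \<inter> A)"
  shows "emeasure lebesgue N \<le> ennreal (1 - c) * emeasure lebesgue G"
proof -
  define K where "K = {(x, r). x \<in> N \<and> 0 < r \<and> ball x r \<subseteq> G \<and>
        c * measure lebesgue (ball x r) \<le> measure lebesgue (ball x r \<inter> A)}"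
  have fine: "\<exists>i. i \<in> K \<and> x \<in> ball (fst i) (snd i) \<and> snd i < d"
    if x: "x \<in> N" and d: "0 < d" for x d
  proof -
    obtain e where e: "e > 0" "ball x e \<subseteq> G"
      using openE[OF G(1)] G(2) x by blast
    obtain r where r: "0 < r" "r < min d e"
        "c * measure lebesgue (ball x r) \<le> measure lebesgue (ball x r \<inter> A)"
      using dens[OF x] d e(1) by (metis min_less_iff_conj)
    have "ball x r \<subseteq> G" using r(2) e(2) by (meson min_less_iff_conj order.trans less_imp_le subset_ball)
    then have "(x, r) \<in> K" using x r unfolding K_def by simp
    then show ?thesis using r by force
  qed
  obtain CC where CC: "countable CC" "CC \<subseteq> K"
      "pairwise (\<lambda>i j. disjnt (ball (fst i) (snd i)) (ball (fst j) (snd j))) CC"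
      "negligible (N - (\<Union>i\<in>CC. ball (fst i) (snd i)))"
    using Vitali_covering_theorem_balls[of N K fst snd, OF fine] by blast
  define B where "B i = ball (fst i) (snd i)" for i :: "'a \<times> real"
  define D where "D = (\<Union>i\<in>CC. B i)"
  have B_sets: "B i \<in> sets lebesgue" for i unfolding B_def by simp
  have B_fin: "B i \<in> lmeasurable" for i unfolding B_def by simp
  have B_K: "B i \<subseteq> G \<and> c * measure lebesgue (B i) \<le> measure lebesgue (B i \<inter> A)"
    if "i \<in> CC" for i using that CC(2) unfolding K_def B_def by (cases i) auto
  have B_disj: "disjoint_family_on B CC"
    using CC(3) unfolding disjoint_family_on_def pairwise_def disjnt_def B_def by metis
  have D_sets: "D \<in> sets lebesgue" unfolding D_def B_def by (simp add: open_UN)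
  have ball_outside_A: "emeasure lebesgue (B i - A) \<le> ennreal (1 - c) * emeasure lebesgue (B i)"
    if "i \<in> CC" for i
  proof -
    have BA: "B i \<inter> A \<in> lmeasurable" "B i - A \<in> lmeasurable"
      using B_fin[of i] B_sets[of i] A by (auto intro: fmeasurableI2)
    have "B i - A = B i - (B i \<inter> A)" by auto
    then have "measure lebesgue (B i - A) = measure lebesgue (B i) - measure lebesgue (B i \<inter> A)"
      using B_fin BA by (simp add: measurable_measure_Diff fmeasurableD)
    also have "\<dots> \<le> (1 - c) * measure lebesgue (B i)"
      using B_K[OF that] by (simp add: algebra_simps)
    finally show ?thesis
      using B_fin BA c by (simp add: emeasure_eq_measure2 ennreal_mult[symmetric] ennreal_leI)
  qed
  have "N \<subseteq> (D - A) \<union> (N - D)" using disj by auto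
  then have "emeasure lebesgue N \<le> emeasure lebesgue ((D - A) \<union> (N - D))"
    using N A D_sets by (intro emeasure_mono) auto
  also have "\<dots> = emeasure lebesgue (D - A)"
    using CC(4) D_sets A
    by (intro emeasure_Un_null_set) (auto simp: negligible_iff_null_sets D_def B_def)
  also have "D - A = (\<Union>i\<in>CC. B i - A)" unfolding D_def by auto
  also have "emeasure lebesgue \<dots> = (\<integral>\<^sup>+i. emeasure lebesgue (B i - A) \<partial>count_space CC)"
  proof (rule emeasure_UN_countable)
    show "disjoint_family_on (\<lambda>i. B i - A) CC"
      using B_disj unfolding disjoint_family_on_def by blast
  qed (use A B_sets CC(1) in auto)
  also have "\<dots> \<le> (\<integral>\<^sup>+i. ennreal (1 - c) * emeasure lebesgue (B i) \<partial>count_space CC)"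
    using ball_outside_A by (intro nn_integral_mono) auto
  also have "\<dots> = ennreal (1 - c) * (\<integral>\<^sup>+i. emeasure lebesgue (B i) \<partial>count_space CC)"
    by (rule nn_integral_cmult) auto
  also have "(\<integral>\<^sup>+i. emeasure lebesgue (B i) \<partial>count_space CC) = emeasure lebesgue D"
    unfolding D_def by (rule emeasure_UN_countable[OF B_sets CC(1) B_disj, symmetric])
  also have "emeasure lebesgue D \<le> emeasure lebesgue G"
    using B_K G(1) D_sets unfolding D_def by (intro emeasure_mono) auto
  finally show ?thesis by (simp add: mult_left_mono)
qed

text \<open>Density criterion for null sets: combining the estimate above with outer regularity
  (choose \<open>G\<close> of measure close to that of \<open>N\<close>) forces \<open>N\<close> to be null.\<close>
lemma negligible_if_dense_balls:
  fixes N A :: "'a::euclidean_space set" and c :: real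
  assumes N: "N \<in> lmeasurable" and A: "A \<in> sets lebesgue" and disj: "N \<inter> A = {}"
    and c: "0 < c" "c < 1"
    and dens: "\<And>x d. x \<in> N \<Longrightarrow> d > 0 \<Longrightarrow> \<exists>r. 0 < r \<and> r < d \<and>
        c * measure lebesgue (ball x r) \<le> measure lebesgue (ball x r \<inter> A)"
  shows "negligible N"
proof (rule ccontr)
  assume "\<not> negligible N"
  define m where "m = measure lebesgue N"
  have m: "m > 0"
    using \<open>\<not> negligible N\<close> N unfolding m_def
    by (metis measure_nonneg negligible_iff_measure0 order_less_le)
  obtain G where G: "open G" "N \<subseteq> G" "G - N \<in> lmeasurable"
      "emeasure lebesgue (G - N) < ennreal (c * m)"
    using sets_lebesgue_outer_open[of N "c * m"] N m c by (auto dest: fmeasurableD)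
  have G_fin: "G \<in> lmeasurable"
    using fmeasurable.Un[OF N G(3)] G(2) by (simp add: Un_absorb1 Un_Diff_cancel)
  have "measure lebesgue G = m + measure lebesgue (G - N)"
    using measure_Un2[OF N G_fin] G(2) unfolding m_def by (simp add: Un_absorb1)
  moreover have "measure lebesgue (G - N) < c * m"
    using G(3,4) by (simp add: emeasure_eq_measure2 ennreal_less_iff)
  ultimately have G_small: "measure lebesgue G < (1 + c) * m" by (simp add: algebra_simps)
  have "emeasure lebesgue N \<le> ennreal (1 - c) * emeasure lebesgue G"
    using emeasure_le_by_dense_balls[OF fmeasurableD[OF N] A disj G(1,2)] c dens by auto
  then have "m \<le> (1 - c) * measure lebesgue G"
    using N G_fin c
    by (simp add: m_def emeasure_eq_measure2 ennreal_mult[symmetric] ennreal_le_iff)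
  also have "\<dots> < (1 - c) * ((1 + c) * m)"
    using G_small c by simp
  also have "\<dots> = m - c * c * m" by (simp add: algebra_simps)
  finally have "c * c * m < 0" by simp
  moreover have "0 < c * c * m" using c m by simp
  ultimately show False by linarith
qed

definition tail_union :: "(nat \<Rightarrow> 'a set) \<Rightarrow> nat \<Rightarrow> 'a set" where
  "tail_union E j = (\<Union>i\<in>{j..}. E i)"

lemma limsup_set_tail_union: "limsup_set E = (\<Inter>j. tail_union E j)"
  by (simp add: limsup_set_def tail_union_def)

lemma tail_union_sets: "(\<And>i. E i \<in> sets M) \<Longrightarrow> tail_union E j \<in> sets M"
  unfolding tail_union_def by (intro sets.countable_UN'') auto

lemma limsup_set_sets: "(\<And>i. E i \<in> sets M) \<Longrightarrow> limsup_set E \<in> sets M"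
  unfolding limsup_set_tail_union by (rule sets.countable_INT) (auto simp: tail_union_sets)

lemma emeasure_limsup_set_eq:
  assumes E: "\<And>i. E i \<in> sets M" and F: "\<And>i. F i \<in> sets M" and EF: "\<And>i. E i \<subseteq> F i"
    and null: "\<And>j. limsup_set F - tail_union E j \<in> null_sets M"
  shows "emeasure M (limsup_set E) = emeasure M (limsup_set F)"
proof -
  have "limsup_set F - limsup_set E \<subseteq> (\<Union>j. limsup_set F - tail_union E j)"
    unfolding limsup_set_tail_union by blast
  moreover have "limsup_set F - limsup_set E \<in> sets M"
    using limsup_set_sets[of F, OF F] limsup_set_sets[of E, OF E] by (rule sets.Diff)
  moreover have "(\<Union>j. limsup_set F - tail_union E j) \<in> null_sets M"
    using null by (rule null_sets_UN)
  ultimately have D_null: "limsup_set F - limsup_set E \<in> null_sets M"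
    by (meson null_sets_subset)
  have "limsup_set E \<subseteq> limsup_set F"
    using EF unfolding limsup_set_def by blast
  then have "emeasure M (limsup_set F) = emeasure M (limsup_set E \<union> (limsup_set F - limsup_set E))"
    by (simp add: Un_absorb1)
  also have "\<dots> = emeasure M (limsup_set E)"
    using limsup_set_sets[of E, OF E] D_null by (rule emeasure_Un_null_set)
  finally show ?thesis by simp
qed

text \<open>The neighbourhoods \<open>Delta\<close> are relatively open in the cube, hence measurable.\<close>
lemma Delta_sets: "Delta T \<delta> \<in> sets lebesgue"
proof -
  have "open {x. infdist x T < \<delta>}" by (intro open_Collect_less continuous_intros)
  then have "Delta T \<delta> = (if T = {} then {} else unit_cube \<inter> {x. infdist x T < \<delta>})"
    and "open {x. infdist x T < \<delta>}" by (auto simp: Delta_def)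
  then show ?thesis by (simp add: unit_cube_def sets.Int)
qed

lemma Delta_mono: "\<delta> \<le> \<delta>' \<Longrightarrow> Delta T \<delta> \<subseteq> Delta T \<delta>'"
  by (auto simp: Delta_def)

lemma ball_inter_unit_cube_subset_Delta:
  assumes "s \<in> T" shows "ball s \<delta> \<inter> unit_cube \<subseteq> Delta T \<delta>"
proof
  fix y assume y: "y \<in> ball s \<delta> \<inter> unit_cube"
  have "infdist y T \<le> dist y s" using assms by (rule infdist_le)
  then show "y \<in> Delta T \<delta>" using y assms by (auto simp: Delta_def dist_commute)
qed

text \<open>Upper bound for the volume of a ball by that of its circumscribed cube.\<close>
lemma measure_ball_le_cube:
  fixes x :: "real^'n" and R :: real
  assumes "0 \<le> R"
  shows "measure lebesgue (ball x R) \<le> (2 * R) ^ CARD('n)"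
proof -
  define r where "r = (\<chi> i::'n. R)"
  have "ball x R \<subseteq> cbox (x - r) (x + r)"
  proof
    fix y assume "y \<in> ball x R"
    then have "\<bar>x$i - y$i\<bar> \<le> R" for i
      using component_le_norm_cart[of "x - y" i] by (simp add: dist_norm)
    then show "y \<in> cbox (x - r) (x + r)"
      unfolding mem_box_cart r_def by (simp add: abs_le_iff algebra_simps)
  qed
  then have "measure lebesgue (ball x R) \<le> measure lebesgue (cbox (x - r) (x + r))"
    by (intro measure_mono_fmeasurable) auto
  also have "\<dots> = (2 * R) ^ CARD('n)"
  proof -
    have "x \<in> cbox (x - r) (x + r)" using assms by (simp add: mem_box_cart r_def)
    then have "measure lborel (cbox (x - r) (x + r)) = (\<Prod>i\<in>UNIV. (x + r)$i - (x - r)$i)"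
      by (intro content_cbox_cart) blast
    then show ?thesis by (simp add: r_def)
  qed
  finally show ?thesis .
qed

text \<open>The unit cube is uniformly thick: around each of its points, the part of the cube
  inside a ball of radius \<open>\<rho>\<close> contains an axis-parallel cube of side \<open>\<rho> / (2k)\<close>.\<close>
lemma unit_cube_thick:
  fixes s :: "real^'n" and \<rho> :: real
  assumes s: "s \<in> unit_cube" and \<rho>: "0 < \<rho>" "\<rho> \<le> CARD('n)"
  shows "(\<rho> / (2 * CARD('n))) ^ CARD('n) \<le> measure lebesgue (ball s \<rho> \<inter> unit_cube)"
proof -
  define k where "k = CARD('n)"
  have k: "real k \<ge> 1" unfolding k_def by (simp add: Suc_leI)
  define h where "h = \<rho> / (2 * k)"
  have h: "0 < h" "h \<le> 1/2" using \<rho> k unfolding h_def k_def by (auto simp: field_simps)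
  text \<open>\<open>P\<close> is the cube of side \<open>h\<close> with a vertex at \<open>s\<close>, pointing into the unit cube.\<close>
  define a where "a = (\<chi> i. if s$i \<le> 1/2 then s$i else s$i - h)"
  define P where "P = cbox a (\<chi> i. a$i + h)"
  have s01: "0 \<le> s$i \<and> s$i \<le> 1" for i using s by (auto simp: unit_cube_def mem_box_cart)
  have P_coord: "0 \<le> y$i \<and> y$i \<le> 1 \<and> \<bar>(s - y)$i\<bar> \<le> h" if "y \<in> P" for y i
  proof -
    have "a$i \<le> y$i" "y$i \<le> a$i + h" using that by (simp_all add: P_def mem_box_cart)
    then show ?thesis using s01[of i] h unfolding a_def
      by (cases "s$i \<le> 1/2") (auto simp: abs_le_iff)
  qed
  have "P \<subseteq> ball s \<rho> \<inter> unit_cube"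
  proof
    fix y assume y: "y \<in> P"
    have "dist s y \<le> (\<Sum>i\<in>UNIV. \<bar>(s - y)$i\<bar>)" unfolding dist_norm by (rule norm_le_l1_cart)
    also have "\<dots> \<le> (\<Sum>i\<in>(UNIV::'n set). h)" using P_coord[OF y] by (intro sum_mono) auto
    also have "\<dots> = \<rho> / 2" using k unfolding h_def k_def by simp
    finally have "dist s y < \<rho>" using \<rho> by simp
    moreover have "y \<in> unit_cube" using P_coord[OF y] by (simp add: unit_cube_def mem_box_cart)
    ultimately show "y \<in> ball s \<rho> \<inter> unit_cube" by simp
  qed
  then have "measure lebesgue P \<le> measure lebesgue (ball s \<rho> \<inter> unit_cube)"
    by (intro measure_mono_fmeasurable) (auto simp: P_def unit_cube_def)
  moreover have "measure lebesgue P = h ^ k"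
  proof -
    have "a \<in> P" using h by (simp add: P_def mem_box_cart)
    then have "measure lborel P = (\<Prod>i\<in>UNIV. (a$i + h) - a$i)"
      unfolding P_def by (subst content_cbox_cart) auto
    then show ?thesis by (simp add: k_def P_def)
  qed
  ultimately show ?thesis unfolding h_def k_def by simp
qed

text \<open>The density that \<open>Delta T \<delta>\<close> is guaranteed to have in a ball of radius
  \<open>(C + 1) * \<delta>\<close> centred in \<open>Delta T (C * \<delta>)\<close>, for cubes of dimension \<open>k\<close>.\<close>
definition ball_density_bound :: "nat \<Rightarrow> real \<Rightarrow> real" where
  "ball_density_bound k C = (1 / (4 * real k * (C + 1))) ^ k"

lemma ball_density_bound_bounds:
  assumes k: "1 \<le> k" and C: "0 \<le> C"
  shows "0 < ball_density_bound k C" "ball_density_bound k C < 1"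
proof -
  have "4 * real k * (C + 1) = 4 * (real k * C) + 4 * real k"
    by (simp add: algebra_simps)
  moreover have "0 \<le> real k * C" "1 \<le> real k" using k C by simp_all
  ultimately have "1 < 4 * real k * (C + 1)" by linarith
  then have "0 < 1 / (4 * real k * (C + 1))" "1 / (4 * real k * (C + 1)) < 1"
    by (simp_all add: divide_less_eq)
  then show "0 < ball_density_bound k C" "ball_density_bound k C < 1"
    unfolding ball_density_bound_def using k by (simp_all add: power_less_one_iff)
qed

lemma Delta_dense_balls:
  fixes T U :: "(real^'n) set" and x :: "real^'n" and C \<delta> :: real
  assumes T: "T \<subseteq> unit_cube" and x: "x \<in> Delta T (C * \<delta>)"
    and \<delta>: "0 < \<delta>" "\<delta> \<le> CARD('n)" and C: "0 \<le> C"
    and U: "Delta T \<delta> \<subseteq> U" "U \<in> sets lebesgue"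
  shows "ball_density_bound CARD('n) C * measure lebesgue (ball x ((C + 1) * \<delta>))
       \<le> measure lebesgue (ball x ((C + 1) * \<delta>) \<inter> U)"
proof -
  define k where "k = CARD('n)"
  define R where "R = (C + 1) * \<delta>"
  obtain s where s: "s \<in> T" "dist x s < C * \<delta>"
  proof -
    have "T \<noteq> {}" "infdist x T < C * \<delta>" using x by (auto simp: Delta_def)
    then show ?thesis using that by (auto simp: infdist_notempty cINF_less_iff)
  qed
  have "ball s \<delta> \<subseteq> ball x R"
  proof
    fix y assume "y \<in> ball s \<delta>"
    then show "y \<in> ball x R"
      using dist_triangle[of x y s] s(2) by (simp add: R_def algebra_simps)
  qed
  then have cube_part: "ball s \<delta> \<inter> unit_cube \<subseteq> ball x R \<inter> U"
    using ball_inter_unit_cube_subset_Delta[OF s(1)] U(1) by blast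
  have "ball_density_bound k C * measure lebesgue (ball x R)
      \<le> ball_density_bound k C * (2 * R) ^ k"
    using measure_ball_le_cube[of R x] ball_density_bound_bounds(1)[of k C] \<delta> C
    unfolding R_def k_def by (intro mult_left_mono) (auto simp: Suc_le_eq)
  also have "\<dots> = (\<delta> / (2 * k)) ^ k"
  proof -
    have "real k \<noteq> 0" "C + 1 \<noteq> 0" using C by (auto simp: k_def)
    then have "1 / (4 * real k * (C + 1)) * (2 * R) = \<delta> / (2 * k)"
      unfolding R_def by (simp add: divide_simps)
    then show ?thesis unfolding ball_density_bound_def by (simp only: power_mult_distrib[symmetric])
  qed
  also have "\<dots> \<le> measure lebesgue (ball s \<delta> \<inter> unit_cube)"
    using unit_cube_thick[of s \<delta>] s(1) T \<delta> unfolding k_def by blast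
  also have "\<dots> \<le> measure lebesgue (ball x R \<inter> U)"
  proof (rule measure_mono_fmeasurable[OF cube_part])
    show "ball s \<delta> \<inter> unit_cube \<in> sets lebesgue" by (simp add: unit_cube_def)
    show "ball x R \<inter> U \<in> lmeasurable"
      using U(2) by (intro fmeasurableI2[OF lmeasurable_ball[of x R]]) auto
  qed
  finally show ?thesis unfolding R_def k_def .
qed

lemma limsup_Delta_minus_tail_negligible:
  fixes S :: "nat \<Rightarrow> (real^'n) set" and \<delta> :: "nat \<Rightarrow> real" and C :: real
  assumes S: "\<And>i. S i \<subseteq> unit_cube" and \<delta>: "\<And>i. \<delta> i > 0" "\<delta> \<longlonglongrightarrow> 0" and C: "0 \<le> C"
  shows "negligible (limsup_set (\<lambda>i. Delta (S i) (C * \<delta> i)) - tail_union (\<lambda>i. Delta (S i) (\<delta> i)) j)"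
    (is "negligible (?L - ?A)")
proof (rule negligible_if_dense_balls[where c = "ball_density_bound CARD('n) C"])
  show "0 < ball_density_bound CARD('n) C" "ball_density_bound CARD('n) C < 1"
    using ball_density_bound_bounds[OF _ C] by (simp_all add: Suc_le_eq)
  have L_sets: "?L \<in> sets lebesgue" by (intro limsup_set_sets Delta_sets)
  show A_sets: "?A \<in> sets lebesgue" by (intro tail_union_sets Delta_sets)
  have "?L \<subseteq> unit_cube" unfolding limsup_set_def Delta_def by blast
  then show "?L - ?A \<in> lmeasurable"
    using L_sets A_sets unfolding unit_cube_def
    by (intro bounded_set_imp_lmeasurable) (auto intro: bounded_subset[OF bounded_cbox])
  show "(?L - ?A) \<inter> ?A = {}" by blast
  fix x d assume x: "x \<in> ?L - ?A" and d: "0 < (d::real)"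
  obtain M where M: "\<And>i. i \<ge> M \<Longrightarrow> \<delta> i < min (d / (C + 1)) 1"
    using order_tendstoD(2)[OF \<delta>(2), of "min (d / (C + 1)) 1"] d C
    by (auto simp: eventually_sequentially)
  obtain i where i: "i \<ge> max j M" "x \<in> Delta (S i) (C * \<delta> i)"
    using x unfolding limsup_set_def by blast
  have "\<delta> i < 1" "\<delta> i < d / (C + 1)" using M[of i] i(1) by auto
  moreover have "1 \<le> real CARD('n)" by (simp add: Suc_le_eq)
  ultimately have small: "\<delta> i \<le> CARD('n)" "(C + 1) * \<delta> i < d"
    using C by (linarith, simp add: pos_less_divide_eq mult.commute)
  have "Delta (S i) (\<delta> i) \<subseteq> ?A" using i(1) unfolding tail_union_def by auto
  then have "ball_density_bound CARD('n) C * measure lebesgue (ball x ((C + 1) * \<delta> i))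
      \<le> measure lebesgue (ball x ((C + 1) * \<delta> i) \<inter> ?A)"
    using Delta_dense_balls[OF S i(2) \<delta>(1) small(1) C _ A_sets] by blast
  moreover have "0 < (C + 1) * \<delta> i" using C \<delta>(1)[of i] by simp
  ultimately show "\<exists>r. 0 < r \<and> r < d \<and> ball_density_bound CARD('n) C *
      measure lebesgue (ball x r) \<le> measure lebesgue (ball x r \<inter> ?A)"
    using small(2) by blast
qed

theorem lemma4:
  fixes S :: "nat \<Rightarrow> (real^'n) set" and \<delta> :: "nat \<Rightarrow> real" and C :: real
  assumes "\<And>i. S i \<subseteq> unit_cube"
    and "\<And>i. \<delta> i > 0"
    and "\<delta> \<longlonglongrightarrow> 0"
    and "C > 1"
  shows "emeasure lebesgue (limsup_set (\<lambda>i. Delta (S i) (\<delta> i)))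
       = emeasure lebesgue (limsup_set (\<lambda>i. Delta (S i) (C * \<delta> i)))"
proof (rule emeasure_limsup_set_eq)
  show "Delta (S i) (\<delta> i) \<subseteq> Delta (S i) (C * \<delta> i)" for i
    using assms(2)[of i] assms(4) by (intro Delta_mono) simp
  show "limsup_set (\<lambda>i. Delta (S i) (C * \<delta> i)) - tail_union (\<lambda>i. Delta (S i) (\<delta> i)) j
      \<in> null_sets lebesgue" for j
    using limsup_Delta_minus_tail_negligible[OF assms(1-3), where C = C and j = j] assms(4)
    by (simp add: negligible_iff_null_sets)
qed (rule Delta_sets)+

end
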